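(* Let $k\ge1$, let $N$ be a power of $2$, let $A \geq 2$, and let $f_0,\dots,f_k:[N]\to\mathbb{C}$ be bounded in magnitude by $1$, extended by zero outside $[N]$. Then $$ \sum_{n:\, N/A \le 2^n \le N}\ \sum_{j=0}^{N/2^n-1} 2^{-n}\Big| \sum_{x,t\in\mathbb{Z}} f_0(x)f_1(x+t)\cdots f_k(x+kt)\,\psi(t/2^n)\,\varphi(2^{-n}x-j)\Big| \leq C\, N^{1/2}(\log A) \inf_{0\le i\le k}\|f_i\|_{\ell^2([N])},$$ with $C$ depending only on $k,\psi,\varphi$.
   Context: $[N] := \{1,\dots,N\}$; $n$ ranges over nonnegative integers. Fix a smooth odd function $\psi:\mathbb{R}\to\mathbb{R}$ supported on $[-2,-1/2]\cup[1/2,2]$ with $\sum_{n\in\mathbb{Z}} 2^{-n}\psi(2^{-n}t) = \frac1t$ for $t \neq 0$, and a smooth $\varphi:\mathbb{R}\to\mathbb{R}$ supported on $[-1,1]$ with $\sum_{j \in \mathbb{Z}} \varphi(x-j) = 1$ for all $x \in \mathbb{R}$. *)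

theory Defs
  imports "HOL-Analysis.Analysis"
begin

definition smooth_fun :: "(real \<Rightarrow> real) \<Rightarrow> bool" where
  "smooth_fun g \<longleftrightarrow> (\<forall>m::nat. \<forall>x. ((deriv ^^ m) g) differentiable (at x))"

definition admissible_psi :: "(real \<Rightarrow> real) \<Rightarrow> bool" where
  "admissible_psi \<psi> \<longleftrightarrow> smooth_fun \<psi>
     \<and> (\<forall>t. \<psi> (-t) = - \<psi> t)
     \<and> (\<forall>t. \<psi> t \<noteq> 0 \<longrightarrow> t \<in> {-2..-1/2} \<union> {1/2..2})
     \<and> (\<forall>t. t \<noteq> 0 \<longrightarrow>
          ((\<lambda>n::int. 2 powr (- real_of_int n) * \<psi> (2 powr (- real_of_int n) * t)) has_sum (1 / t)) UNIV)"

definition admissible_phi :: "(real \<Rightarrow> real) \<Rightarrow> bool" where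
  "admissible_phi \<phi> \<longleftrightarrow> smooth_fun \<phi>
     \<and> (\<forall>x. \<phi> x \<noteq> 0 \<longrightarrow> x \<in> {-1..1})
     \<and> (\<forall>x. ((\<lambda>j::int. \<phi> (x - real_of_int j)) has_sum 1) UNIV)"

definition ext0 :: "nat \<Rightarrow> (int \<Rightarrow> complex) \<Rightarrow> int \<Rightarrow> complex" where
  "ext0 N g x = (if 1 \<le> x \<and> x \<le> int N then g x else 0)"

definition l2norm_N :: "nat \<Rightarrow> (int \<Rightarrow> complex) \<Rightarrow> real" where
  "l2norm_N N g = sqrt (\<Sum>x\<in>{1..int N}. (cmod (g x))^2)"

end

theory Submission
  imports Defs
begin

text \<open>The trivial bound already suffices. By the triangle inequality each summand is at most
  a weighted sum of \<open>|f\<^sub>m(x + m t)|\<close> for any fixed \<open>m\<close>, since the other factors have modulus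
  at most 1. The shifts of \<open>\<phi>\<close> overlap at most three times, the dilate \<open>\<psi>(\<cdot>/2\<^sup>n)\<close> has
  \<open>O(2\<^sup>n)\<close> nonzero integer values, and Cauchy--Schwarz bounds the \<open>\<ell>\<^sup>1\<close> norm of \<open>f\<^sub>m\<close> by
  \<open>N\<^sup>1\<^sup>/\<^sup>2 \<parallel>f\<^sub>m\<parallel>\<^sub>2\<close>. So every scale contributes \<open>O(N\<^sup>1\<^sup>/\<^sup>2 \<parallel>f\<^sub>m\<parallel>\<^sub>2)\<close>, and there are at most
  \<open>O(log A)\<close> dyadic scales between \<open>N/A\<close> and \<open>N\<close>.\<close>

lemma smooth_fun_bounded:
  assumes "smooth_fun g" and supp: "\<And>x. g x \<noteq> 0 \<Longrightarrow> \<bar>x\<bar> \<le> r"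
  obtains M where "\<And>x. \<bar>g x\<bar> \<le> M"
proof -
  have "\<And>x. g differentiable (at x)"
    using assms(1) unfolding smooth_fun_def by (metis funpow_0)
  hence "continuous_on (cball 0 r) g"
    by (meson continuous_at_imp_continuous_on differentiable_imp_continuous_within)
  hence "bounded (g ` cball 0 r)"
    by (intro compact_imp_bounded compact_continuous_image) simp_all
  then obtain B where B: "\<forall>y\<in>g ` cball 0 r. norm y \<le> B"
    unfolding bounded_iff by blast
  have "\<bar>g x\<bar> \<le> max B 0" for x
    using B[rule_format, of "g x"] supp[of x] by (cases "g x = 0") (auto simp: dist_real_def)
  thus thesis by (rule that)
qed

lemma norm_prod_le_norm_factor:
  fixes a :: "'i \<Rightarrow> 'a::{real_normed_field}"
  assumes "finite I" and "m \<in> I" and le1: "\<And>i. i \<in> I \<Longrightarrow> norm (a i) \<le> 1"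
  shows "norm (\<Prod>i\<in>I. a i) \<le> norm (a m)"
proof -
  have "norm (\<Prod>i\<in>I. a i) = norm (a m) * (\<Prod>i\<in>I - {m}. norm (a i))"
    using prod.remove[OF assms(1,2), of "\<lambda>i. norm (a i)"] by (simp add: prod_norm)
  also have "\<dots> \<le> norm (a m) * 1"
    by (intro mult_left_mono prod_le_1) (auto simp: le1)
  finally show ?thesis by simp
qed

lemma sum_translate_le:
  fixes h :: "'a::ab_group_add \<Rightarrow> real"
  assumes "finite X" and "\<And>y. h y \<ge> 0" and "\<And>y. y \<notin> X \<Longrightarrow> h y = 0"
  shows "(\<Sum>x\<in>X. h (x + c)) \<le> (\<Sum>y\<in>X. h y)"
proof -
  have "(\<Sum>x\<in>X. h (x + c)) = (\<Sum>y\<in>(\<lambda>x. x + c) ` X. h y)"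
    by (subst sum.reindex) (auto simp: inj_on_def)
  also have "\<dots> \<le> (\<Sum>y\<in>(\<lambda>x. x + c) ` X \<union> X. h y)"
    by (rule sum_mono2) (auto simp: assms)
  also have "\<dots> = (\<Sum>y\<in>X. h y)"
    by (rule sum.mono_neutral_right) (auto simp: assms)
  finally show ?thesis .
qed

lemma sum_cmod_le_l2norm_N:
  "(\<Sum>y\<in>{1..int N}. cmod (g y)) \<le> sqrt (real N) * l2norm_N N g"
  using L2_set_mult_ineq[of "\<lambda>y. cmod (g y)" "\<lambda>_. 1" "{1..int N}"]
  by (simp add: L2_set_def l2norm_N_def mult.commute)

lemma l2norm_N_ext0 [simp]: "l2norm_N N (ext0 N g) = l2norm_N N g"
  unfolding l2norm_N_def ext0_def by simp

lemma sum_abs_integer_shifts_le: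
  fixes \<phi> :: "real \<Rightarrow> real"
  assumes M: "\<And>x. \<bar>\<phi> x\<bar> \<le> M" and supp: "\<And>x. \<phi> x \<noteq> 0 \<Longrightarrow> \<bar>x\<bar> \<le> 1"
  shows "(\<Sum>j\<in>{0..<K::nat}. \<bar>\<phi> (y - real j)\<bar>) \<le> 3 * M"
proof -
  define c where "c = nat \<lceil>y - 1\<rceil>"
  let ?S = "{j\<in>{0..<K}. \<bar>y - real j\<bar> \<le> 1}"
  have "?S \<subseteq> {c..<c+3}"
  proof
    fix j assume j: "j \<in> ?S"
    have "\<lceil>y - 1\<rceil> \<le> int j" using j by (simp only: ceiling_le_iff) auto
    moreover have "real j < real_of_int \<lceil>y - 1\<rceil> + 3"
      using j le_of_int_ceiling[of y] by (simp add: abs_le_iff) linarith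
    ultimately show "j \<in> {c..<c+3}" unfolding c_def by auto
  qed
  hence card: "real (card ?S) \<le> 3"
    using card_mono[of "{c..<c+3}" ?S] by simp
  have "(\<Sum>j\<in>{0..<K}. \<bar>\<phi> (y - real j)\<bar>) = (\<Sum>j\<in>?S. \<bar>\<phi> (y - real j)\<bar>)"
    by (rule sum.mono_neutral_right) (auto dest: supp)
  also have "\<dots> \<le> real (card ?S) * M"
    using sum_bounded_above[of ?S "\<lambda>j. \<bar>\<phi> (y - real j)\<bar>" M] M by simp
  also have "\<dots> \<le> 3 * M"
    using card M[of 0] by (intro mult_right_mono) auto
  finally show ?thesis .
qed

lemma sum_abs_dyadic_dilate_le:
  fixes \<psi> :: "real \<Rightarrow> real" and T :: "int set"
  assumes M: "\<And>x. \<bar>\<psi> x\<bar> \<le> M" and supp: "\<And>x. \<psi> x \<noteq> 0 \<Longrightarrow> \<bar>x\<bar> \<le> 2"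
  shows "(\<Sum>t\<in>T. \<bar>\<psi> (real_of_int t / 2 ^ n)\<bar>) \<le> 5 * 2 ^ n * M"
proof -
  let ?B = "{- (2 ^ (n+1))..(2::int) ^ (n+1)}"
  have vanish: "\<psi> (real_of_int t / 2 ^ n) = 0" if "t \<notin> ?B" for t
  proof (rule ccontr)
    assume "\<psi> (real_of_int t / 2 ^ n) \<noteq> 0"
    hence "\<bar>real_of_int t\<bar> \<le> 2 * 2 ^ n"
      using supp by (fastforce simp: divide_le_eq abs_divide)
    hence "real_of_int \<bar>t\<bar> \<le> real_of_int (2 ^ (n+1))" by simp
    hence "\<bar>t\<bar> \<le> 2 ^ (n+1)" by (simp only: of_int_le_iff)
    thus False using that by (simp add: abs_le_iff)
  qed
  show ?thesis
  proof (cases "finite T")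
    case True
    have "(\<Sum>t\<in>T. \<bar>\<psi> (real_of_int t / 2 ^ n)\<bar>) = (\<Sum>t\<in>T \<inter> ?B. \<bar>\<psi> (real_of_int t / 2 ^ n)\<bar>)"
      using True vanish by (intro sum.mono_neutral_right) auto
    also have "\<dots> \<le> (\<Sum>t\<in>?B. \<bar>\<psi> (real_of_int t / 2 ^ n)\<bar>)"
      by (rule sum_mono2) auto
    also have "\<dots> \<le> real (card ?B) * M"
      using sum_bounded_above[of ?B _ M] M by simp
    also have "\<dots> = (2 ^ (n+2) + 1) * M" by (simp add: algebra_simps)
    also have "\<dots> \<le> 5 * 2 ^ n * M"
      using M[of 0] by (intro mult_right_mono) auto
    finally show ?thesis .
  qed (use M[of 0] in simp)
qed

lemma dyadic_scale_sum_le: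
  fixes P :: "int \<Rightarrow> int \<Rightarrow> complex" and g :: "int \<Rightarrow> complex" and T :: "int set"
  assumes P: "\<And>x t. cmod (P x t) \<le> cmod (g (x + c * t))"
    and g: "\<And>y. y \<notin> {1..int N} \<Longrightarrow> g y = 0"
    and M\<psi>: "\<And>x. \<bar>\<psi> x\<bar> \<le> M\<psi>" and \<psi>: "\<And>x. \<psi> x \<noteq> 0 \<Longrightarrow> \<bar>x\<bar> \<le> 2"
    and M\<phi>: "\<And>x. \<bar>\<phi> x\<bar> \<le> M\<phi>" and \<phi>: "\<And>x. \<phi> x \<noteq> 0 \<Longrightarrow> \<bar>x\<bar> \<le> 1"
  shows "(\<Sum>j\<in>{0..<K}. 2 powr (- real n) * cmod (\<Sum>x\<in>{1..int N}. \<Sum>t\<in>T.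
            P x t * complex_of_real (\<psi> (real_of_int t / 2 ^ n))
            * complex_of_real (\<phi> (2 powr (- real n) * real_of_int x - real j))))
     \<le> 15 * M\<psi> * M\<phi> * sqrt (real N) * l2norm_N N g"
proof -
  let ?X = "{1..int N}" and ?J = "{0..<K}"
  define h where "h y = cmod (g y)" for y
  define w where "w t = \<bar>\<psi> (real_of_int t / 2 ^ n)\<bar>" for t
  define v where "v x j = \<bar>\<phi> (2 powr (- real n) * real_of_int x - real j)\<bar>" for x and j :: nat
  define L where "L = sqrt (real N) * l2norm_N N g"
  have M\<phi>0: "M\<phi> \<ge> 0" using M\<phi>[of 0] by simp
  have L0: "L \<ge> 0" by (simp add: L_def l2norm_N_def sum_nonneg)
  have summand: "cmod (\<Sum>x\<in>?X. \<Sum>t\<in>T. P x t * complex_of_real (\<psi> (real_of_int t / 2 ^ n))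
            * complex_of_real (\<phi> (2 powr (- real n) * real_of_int x - real j)))
      \<le> (\<Sum>x\<in>?X. \<Sum>t\<in>T. h (x + c * t) * w t * v x j)" for j
    by (intro order_trans[OF norm_sum] sum_mono order_trans[OF norm_sum])
      (auto simp: norm_mult h_def w_def v_def intro!: mult_right_mono P)
  have translate: "(\<Sum>x\<in>?X. h (x + c * t)) \<le> L" for t
    using sum_translate_le[of ?X h "c * t"] sum_cmod_le_l2norm_N[of g N]
    by (simp add: h_def L_def g)
  have "(\<Sum>j\<in>?J. 2 powr (- real n) * cmod (\<Sum>x\<in>?X. \<Sum>t\<in>T.
            P x t * complex_of_real (\<psi> (real_of_int t / 2 ^ n))
            * complex_of_real (\<phi> (2 powr (- real n) * real_of_int x - real j))))
      \<le> (\<Sum>j\<in>?J. 2 powr (- real n) * (\<Sum>x\<in>?X. \<Sum>t\<in>T. h (x + c * t) * w t * v x j))"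
    by (intro sum_mono mult_left_mono summand) simp
  also have "\<dots> = 2 powr (- real n) * (\<Sum>x\<in>?X. \<Sum>t\<in>T. h (x + c * t) * w t * (\<Sum>j\<in>?J. v x j))"
    by (simp add: sum_distrib_left sum.swap[of _ ?J])
  also have "\<dots> \<le> 2 powr (- real n) * (\<Sum>x\<in>?X. \<Sum>t\<in>T. h (x + c * t) * w t * (3 * M\<phi>))"
    unfolding v_def
    by (intro mult_left_mono sum_mono sum_abs_integer_shifts_le[OF M\<phi> \<phi>])
      (auto simp: h_def w_def)
  also have "\<dots> = 2 powr (- real n) * (3 * M\<phi>) * (\<Sum>t\<in>T. w t * (\<Sum>x\<in>?X. h (x + c * t)))"
    by (simp add: sum_distrib_left sum_distrib_right sum.swap[of _ ?X] mult_ac)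
  also have "\<dots> \<le> 2 powr (- real n) * (3 * M\<phi>) * (\<Sum>t\<in>T. w t * L)"
    using translate M\<phi>0 by (intro mult_left_mono sum_mono) (auto simp: w_def)
  also have "\<dots> = 2 powr (- real n) * (3 * M\<phi> * L) * (\<Sum>t\<in>T. w t)"
    by (simp add: sum_distrib_left mult_ac)
  also have "\<dots> \<le> 2 powr (- real n) * (3 * M\<phi> * L) * (5 * 2 ^ n * M\<psi>)"
    unfolding w_def using M\<phi>0 L0
    by (intro mult_left_mono sum_abs_dyadic_dilate_le[OF M\<psi> \<psi>]) auto
  also have "\<dots> = (2 powr (- real n) * 2 ^ n) * (15 * M\<psi> * M\<phi> * L)"
    by (simp add: mult_ac)
  also have "2 powr (- real n) * 2 ^ n = 1"
    by (simp add: powr_minus powr_realpow)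
  finally show ?thesis by (simp add: L_def mult_ac)
qed

lemma card_dyadic_scales_le:
  fixes A :: real
  assumes N: "N = 2 ^ M" and A: "A \<ge> 2"
  shows "real (card {n::nat. real N / A \<le> 2 ^ n \<and> 2 ^ n \<le> N}) \<le> 2 * ln A / ln 2"
proof -
  let ?S = "{n::nat. real N / A \<le> 2 ^ n \<and> 2 ^ n \<le> N}"
  define D where "D = nat \<lfloor>log 2 A\<rfloor>"
  have log_ge_1: "log 2 A \<ge> 1" using A by (simp add: le_log_iff)
  have "?S \<subseteq> {M - D..M}"
  proof
    fix n assume n: "n \<in> ?S"
    hence "n \<le> M" using N by (simp add: power_increasing_iff)
    have "(2::real) ^ (M - n) * 2 ^ n = 2 ^ M"
      using \<open>n \<le> M\<close> by (simp flip: power_add)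
    moreover have "2 ^ M \<le> A * 2 ^ n" using n A N by (simp add: divide_le_eq mult.commute)
    ultimately have "2 ^ (M - n) * 2 ^ n \<le> A * (2::real) ^ n" by simp
    hence "2 powr real (M - n) \<le> A" by (simp add: powr_realpow)
    hence "real (M - n) \<le> log 2 A" using A by (simp add: le_log_iff)
    hence "M - n \<le> D" unfolding D_def by linarith
    thus "n \<in> {M - D..M}" using \<open>n \<le> M\<close> by simp
  qed
  hence "card ?S \<le> D + 1"
    using card_mono[of "{M - D..M}" ?S] by simp
  moreover have "real D \<le> log 2 A" unfolding D_def using log_ge_1 by linarith
  ultimately have "real (card ?S) \<le> 2 * log 2 A" using log_ge_1 by linarith
  thus ?thesis by (simp add: log_def)
qed

lemma multilinear_dyadic_sum_le:
  fixes f :: "nat \<Rightarrow> int \<Rightarrow> complex" and A :: real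
  assumes M\<psi>: "\<And>x. \<bar>\<psi> x\<bar> \<le> M\<psi>" and \<psi>: "\<And>x. \<psi> x \<noteq> 0 \<Longrightarrow> \<bar>x\<bar> \<le> 2"
    and M\<phi>: "\<And>x. \<bar>\<phi> x\<bar> \<le> M\<phi>" and \<phi>: "\<And>x. \<phi> x \<noteq> 0 \<Longrightarrow> \<bar>x\<bar> \<le> 1"
    and N: "N = 2 ^ M" and A: "A \<ge> 2"
    and f: "\<forall>i\<le>k. \<forall>x\<in>{1..int N}. cmod (f i x) \<le> 1"
  shows "(\<Sum>n\<in>{n::nat. real N / A \<le> 2 ^ n \<and> 2 ^ n \<le> N}.
        \<Sum>j\<in>{0..<N div 2 ^ n}.
          2 powr (- real n) *
          cmod (\<Sum>x\<in>{1..int N}. \<Sum>t\<in>{- int N..int N}.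
              ext0 N (f 0) x * (\<Prod>i\<in>{1..k}. ext0 N (f i) (x + int i * t))
              * complex_of_real (\<psi> (real_of_int t / 2 ^ n))
              * complex_of_real (\<phi> (2 powr (- real n) * real_of_int x - real j))))
     \<le> 2 / ln 2 * (15 * M\<psi> * M\<phi>) * sqrt (real N) * ln A * Min ((\<lambda>i. l2norm_N N (f i)) ` {0..k})"
proof -
  have "Min ((\<lambda>i. l2norm_N N (f i)) ` {0..k}) \<in> (\<lambda>i. l2norm_N N (f i)) ` {0..k}"
    by (rule Min_in) auto
  then obtain m where "m \<in> {0..k}" and m: "Min ((\<lambda>i. l2norm_N N (f i)) ` {0..k}) = l2norm_N N (f m)"
    by (metis (no_types, lifting) imageE)
  define B where "B = 15 * M\<psi> * M\<phi> * sqrt (real N) * l2norm_N N (f m)"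
  have ext0_le_1: "cmod (ext0 N (f i) y) \<le> 1" if "i \<le> k" for i y
    using f that by (simp add: ext0_def)
  have factor: "cmod (ext0 N (f 0) x * (\<Prod>i\<in>{1..k}. ext0 N (f i) (x + int i * t)))
      \<le> cmod (ext0 N (f m) (x + int m * t))" for x t
    using norm_prod_le_norm_factor[of "{0..k}" m "\<lambda>i. ext0 N (f i) (x + int i * t)"]
      \<open>m \<in> {0..k}\<close> ext0_le_1 by (simp add: prod.atLeast_Suc_atMost)
  have support: "ext0 N (f m) y = 0" if "y \<notin> {1..int N}" for y
    using that by (auto simp: ext0_def)
  have scale: "(\<Sum>j\<in>{0..<K}. 2 powr (- real n) * cmod (\<Sum>x\<in>{1..int N}. \<Sum>t\<in>T.
          ext0 N (f 0) x * (\<Prod>i\<in>{1..k}. ext0 N (f i) (x + int i * t))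
          * complex_of_real (\<psi> (real_of_int t / 2 ^ n))
          * complex_of_real (\<phi> (2 powr (- real n) * real_of_int x - real j))))
      \<le> B" for K n T
    using dyadic_scale_sum_le[where \<psi> = \<psi> and \<phi> = \<phi> and N = N and g = "ext0 N (f m)" and c = "int m",
      OF factor support M\<psi> \<psi> M\<phi> \<phi>]
    by (simp add: B_def)
  have "B \<ge> 0"
    using M\<psi>[of 0] M\<phi>[of 0] by (simp add: B_def l2norm_N_def sum_nonneg)
  hence "real (card {n. real N / A \<le> 2 ^ n \<and> 2 ^ n \<le> N}) * B \<le> 2 * ln A / ln 2 * B"
    by (intro mult_right_mono card_dyadic_scales_le[OF N A])
  also have "\<dots> = 2 / ln 2 * (15 * M\<psi> * M\<phi>) * sqrt (real N) * ln A * l2norm_N N (f m)"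
    by (simp add: B_def)
  finally have bound: "real (card {n. real N / A \<le> 2 ^ n \<and> 2 ^ n \<le> N}) * B
      \<le> 2 / ln 2 * (15 * M\<psi> * M\<phi>) * sqrt (real N) * ln A * l2norm_N N (f m)" .
  show ?thesis unfolding m
    by (rule order_trans[OF _ bound], rule sum_bounded_above, rule scale)
qed

theorem lemma3p2:
  fixes \<psi> \<phi> :: "real \<Rightarrow> real" and k :: nat
  assumes "admissible_psi \<psi>" and "admissible_phi \<phi>" and "k \<ge> 1"
  shows "\<exists>C::real. \<forall>(N::nat) (A::real) (f::nat \<Rightarrow> int \<Rightarrow> complex).
     (\<exists>m::nat. N = 2 ^ m) \<longrightarrow> A \<ge> 2 \<longrightarrow>
     (\<forall>i\<le>k. \<forall>x\<in>{1..int N}. cmod (f i x) \<le> 1) \<longrightarrow>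
     (\<Sum>n\<in>{n::nat. real N / A \<le> 2 ^ n \<and> 2 ^ n \<le> N}.
        \<Sum>j\<in>{0..<N div 2 ^ n}.
          2 powr (- real n) *
          cmod (\<Sum>x\<in>{1..int N}. \<Sum>t\<in>{- int N..int N}.
              ext0 N (f 0) x * (\<Prod>i\<in>{1..k}. ext0 N (f i) (x + int i * t))
              * complex_of_real (\<psi> (real_of_int t / 2 ^ n))
              * complex_of_real (\<phi> (2 powr (- real n) * real_of_int x - real j))))
     \<le> C * sqrt (real N) * ln A * Min ((\<lambda>i. l2norm_N N (f i)) ` {0..k})"
proof -
  have \<psi>: "\<And>x. \<psi> x \<noteq> 0 \<Longrightarrow> \<bar>x\<bar> \<le> 2"
    using assms(1) unfolding admissible_psi_def by fastforce
  have \<phi>: "\<And>x. \<phi> x \<noteq> 0 \<Longrightarrow> \<bar>x\<bar> \<le> 1"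
    using assms(2) unfolding admissible_phi_def by fastforce
  obtain M\<psi> where M\<psi>: "\<And>x. \<bar>\<psi> x\<bar> \<le> M\<psi>"
    using smooth_fun_bounded[of \<psi>] assms(1) \<psi> unfolding admissible_psi_def by blast
  obtain M\<phi> where M\<phi>: "\<And>x. \<bar>\<phi> x\<bar> \<le> M\<phi>"
    using smooth_fun_bounded[of \<phi>] assms(2) \<phi> unfolding admissible_phi_def by blast
  show ?thesis
    by (intro exI[of _ "2 / ln 2 * (15 * M\<psi> * M\<phi>)"] allI impI, elim exE)
      (rule multilinear_dyadic_sum_le[OF M\<psi> \<psi> M\<phi> \<phi>]; assumption)
qed

end
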